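(* Let $\gamma\in V$ be an element of finite order. Then $\gamma$ admits a non-empty open weakly $\gamma$-wandering subset of $S^1$. If moreover $\gamma\in T$, then $\gamma$ admits a non-empty open $\gamma$-wandering subset of $S^1$ (in fact, in that case any weakly $\gamma$-wandering set is $\gamma$-wandering).
   Context: $S^1$ is the interval $[0,1]$ with $0$ and $1$ identified. Thompson's group $T$ is the group of piecewise linear orientation-preserving homeomorphisms of $S^1$ which preserve the set of finite dyadic fractions, have finitely many breakpoints, all at finite dyadic fractions, and all slopes integer powers of $2$. Thompson's group $V$ is the group of left-continuous bijections of $S^1$ which map finite dyadic fractions to finite dyadic fractions, are differentiable except at finitely many finite dyadic fractions, and on each maximal interval of differentiability are linear with slope an integer power of $2$; $T\le V$. For $\gamma\in V$, a subset $U\subseteq S^1$ is $\gamma$-wandering if for every $n\in\mathbb{Z}$ with $\gamma^n\neq e$ we have $\gamma^n(U)\cap U=\emptyset$; $U$ is weakly $\gamma$-wandering if for every $n\in\mathbb{Z}$, either $\gamma^n$ fixes $U$ pointwise or $\gamma^n(U)\cap U=\emptyset$. *)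

theory Defs
  imports "HOL-Analysis.Analysis"
begin

text \<open>The circle S^1 = [0,1] with 0 and 1 identified is modelled by the
half-open interval (0,1] (the point 0 = 1 is represented by 1).  This
representation suits left-continuous maps, whose pieces are intervals (a,b].\<close>

definition S1 :: "real set" where
  "S1 = {0<..1}"

definition circ :: "real \<Rightarrow> real" where
  "circ x = x - of_int \<lceil>x\<rceil> + 1"

definition s1_open :: "real set \<Rightarrow> bool" where
  "s1_open U \<longleftrightarrow> U \<subseteq> S1 \<and> open (circ -` U)"

definition dyadic :: "real \<Rightarrow> bool" where
  "dyadic x \<longleftrightarrow> (\<exists>m::int. \<exists>n::nat. x = of_int m / 2 ^ n)"

text \<open>Thompson's group V: left-continuous bijections of S^1, piecewise linear
(as circle maps) on finitely many intervals (a_i, a_(i+1)] with dyadic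
endpoints, each piece of slope an integer power of 2 and mapping dyadics to
dyadics (i.e. with dyadic intercept).\<close>
definition thompsonV :: "(real \<Rightarrow> real) \<Rightarrow> bool" where
  "thompsonV g \<longleftrightarrow> bij_betw g S1 S1 \<and>
     (\<exists>bs::real list. length bs \<ge> 2 \<and> sorted_wrt (<) bs \<and> hd bs = 0 \<and> last bs = 1 \<and>
        (\<forall>b\<in>set bs. dyadic b) \<and>
        (\<forall>i < length bs - 1. \<exists>k::int. \<exists>c::real. dyadic c \<and>
            (\<forall>x \<in> {bs ! i <.. bs ! Suc i}. g x = circ (2 powi k * x + c))))"

text \<open>Thompson's group T: elements of V that are orientation-preserving
homeomorphisms of S^1, i.e. admit a continuous increasing lift F : R -> R
with F(x+1) = F(x) + 1.\<close>
definition thompsonT :: "(real \<Rightarrow> real) \<Rightarrow> bool" where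
  "thompsonT g \<longleftrightarrow> thompsonV g \<and>
     (\<exists>F::real \<Rightarrow> real. continuous_on UNIV F \<and> strict_mono F \<and>
        (\<forall>x. F (x + 1) = F x + 1) \<and> (\<forall>x. g (circ x) = circ (F x)))"

definition zpow :: "(real \<Rightarrow> real) \<Rightarrow> int \<Rightarrow> real \<Rightarrow> real" where
  "zpow g n = (if 0 \<le> n then g ^^ nat n else (inv_into S1 g) ^^ nat (- n))"

definition is_id :: "(real \<Rightarrow> real) \<Rightarrow> bool" where
  "is_id h \<longleftrightarrow> (\<forall>x\<in>S1. h x = x)"

definition finite_order :: "(real \<Rightarrow> real) \<Rightarrow> bool" where
  "finite_order g \<longleftrightarrow> (\<exists>n::nat. n > 0 \<and> is_id (g ^^ n))"

definition wandering :: "(real \<Rightarrow> real) \<Rightarrow> real set \<Rightarrow> bool" where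
  "wandering g U \<longleftrightarrow> (\<forall>n::int. \<not> is_id (zpow g n) \<longrightarrow> zpow g n ` U \<inter> U = {})"

definition weakly_wandering :: "(real \<Rightarrow> real) \<Rightarrow> real set \<Rightarrow> bool" where
  "weakly_wandering g U \<longleftrightarrow>
     (\<forall>n::int. (\<forall>x\<in>U. zpow g n x = x) \<or> zpow g n ` U \<inter> U = {})"

end

theory Submission
  imports Defs
begin

text \<open>Let N be the order of g. Pick x in (0,1) whose first N iterates avoid the breakpoints of g
  and the preimage of the point 0 = 1. Near x each power g^k, k < N, is then an affine map of the
  line of positive slope: if it fixes x, periodicity forces slope 1 and it is the identity near x;
  otherwise, by continuity, it moves a small neighbourhood of x off itself. The intersection of
  these neighbourhoods is weakly wandering.

  If g lies in T and a power g^k fixes a point x, normalise a strictly increasing degree-one lift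
  of g^k to fix x as well. Its N-th iterate maps the window [x, x + 1) into itself and projects to
  the identity, so it is the identity on the window; a strictly increasing map with a periodic
  point fixes it, hence g^k is the identity. Thus a weakly wandering set can only meet its images
  under trivial powers.\<close>

lemma circ_add_int [simp]: "circ (t + of_int j) = circ t"
  unfolding circ_def by simp

lemma circ_id: "y \<in> S1 \<Longrightarrow> circ y = y"
  unfolding circ_def S1_def by (simp add: ceiling_eq_iff)

lemma circ_in_S1: "circ t \<in> S1"
  unfolding circ_def S1_def using ceiling_correct[of t] by (auto simp: algebra_simps)

lemma circ_eq_circ_iff: "circ a = circ b \<longleftrightarrow> (\<exists>j::int. a = b + of_int j)"
proof
  assume "circ a = circ b"
  then show "\<exists>j::int. a = b + of_int j"
    unfolding circ_def by (intro exI[of _ "\<lceil>a\<rceil> - \<lceil>b\<rceil>"]) (auto simp: algebra_simps)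
qed auto

lemma circ_inj_window:
  assumes "circ a = circ b" "x \<le> a" "a < x + 1" "x \<le> b" "b < x + 1"
  shows "a = b"
proof -
  obtain j :: int where j: "a = b + of_int j" using assms(1) circ_eq_circ_iff by blast
  then have "\<bar>of_int j :: real\<bar> < 1" using assms(2-5) by auto
  then show ?thesis using j by simp
qed

lemma circ_surj_window:
  assumes "z \<in> S1"
  obtains y where "x \<le> y" "y < x + 1" "circ y = z"
proof
  show "x \<le> z + of_int \<lceil>x - z\<rceil>" "z + of_int \<lceil>x - z\<rceil> < x + 1"
    using ceiling_correct[of "x - z"] by linarith+
  show "circ (z + of_int \<lceil>x - z\<rceil>) = z" using circ_id[OF assms] by simp
qed

lemma circ_eventually_translation:
  assumes "circ t0 \<noteq> 1"
  shows "\<forall>\<^sub>F t in nhds t0. circ t = t - of_int (\<lceil>t0\<rceil> - 1)"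
proof -
  have "t0 \<noteq> of_int \<lceil>t0\<rceil>" using assms unfolding circ_def by auto
  then have "t0 \<in> {of_int \<lceil>t0\<rceil> - 1 <..< of_int \<lceil>t0\<rceil>}"
    using ceiling_correct[of t0] by (auto simp: less_le)
  moreover have "circ t = t - of_int (\<lceil>t0\<rceil> - 1)"
    if "t \<in> {of_int \<lceil>t0\<rceil> - 1 <..< of_int \<lceil>t0\<rceil>}" for t
    using that unfolding circ_def by (simp add: ceiling_eq_iff)
  ultimately show ?thesis unfolding eventually_nhds by (intro exI[of _ "{of_int \<lceil>t0\<rceil> - 1 <..< of_int \<lceil>t0\<rceil>}"]) auto
qed

lemma s1_open_if_open_in_unit_interval:
  assumes "open U" "U \<subseteq> {0<..<1}"
  shows "s1_open U"
proof -
  have "circ -` U = (\<Union>j::int. (\<lambda>t. t - of_int j) -` U)"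
  proof (intro set_eqI iffI)
    fix t assume "t \<in> circ -` U"
    then have "t - of_int (\<lceil>t\<rceil> - 1) \<in> U" unfolding circ_def by (simp add: algebra_simps)
    then show "t \<in> (\<Union>j::int. (\<lambda>t. t - of_int j) -` U)" by blast
  next
    fix t assume "t \<in> (\<Union>j::int. (\<lambda>t. t - of_int j) -` U)"
    then obtain j :: int where "t - of_int j \<in> U" by blast
    moreover have "circ (t - of_int j) = t - of_int j"
      using calculation assms(2) by (intro circ_id) (auto simp: S1_def)
    ultimately show "t \<in> circ -` U" using circ_add_int[of "t - of_int j" j] by simp
  qed
  moreover have "open ((\<lambda>t. t - of_int j) -` U)" for j :: int
    by (intro open_vimage assms(1) continuous_intros)
  ultimately show ?thesis using assms unfolding s1_open_def S1_def by auto
qed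

definition affine_near :: "(real \<Rightarrow> real) \<Rightarrow> real \<Rightarrow> real \<Rightarrow> bool" where
  "affine_near h x a \<longleftrightarrow> (\<exists>c. \<forall>\<^sub>F y in nhds x. h y = a * y + c)"

lemma affine_near_isCont: "affine_near h x a \<Longrightarrow> isCont h x"
  unfolding affine_near_def using isCont_cong by (fastforce intro: continuous_intros)

lemma affine_near_comp:
  assumes h1: "affine_near h1 (h2 x) a1" and h2: "affine_near h2 x a2"
  shows "affine_near (h1 \<circ> h2) x (a1 * a2)"
proof -
  obtain c1 where c1: "\<forall>\<^sub>F z in nhds (h2 x). h1 z = a1 * z + c1" using h1 unfolding affine_near_def by blast
  obtain c2 where c2: "\<forall>\<^sub>F y in nhds x. h2 y = a2 * y + c2" using h2 unfolding affine_near_def by blast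
  have "h2 x = a2 * x + c2" using eventually_nhds_x_imp_x[OF c2] .
  then have "((\<lambda>y. a2 * y + c2) \<longlongrightarrow> h2 x) (nhds x)"
    using tendsto_at_iff_tendsto_nhds[of "\<lambda>y. a2 * y + c2" x] by (auto intro!: tendsto_eq_intros)
  from eventually_compose_filterlim[OF c1 this]
  have "\<forall>\<^sub>F y in nhds x. h1 (a2 * y + c2) = a1 * (a2 * y + c2) + c1" .
  with c2 have "\<forall>\<^sub>F y in nhds x. (h1 \<circ> h2) y = (a1 * a2) * y + (a1 * c2 + c1)"
    by eventually_elim (simp add: algebra_simps)
  then show ?thesis unfolding affine_near_def by blast
qed

lemma affine_near_funpow_orbit:
  assumes "\<And>j. j < n \<Longrightarrow> \<exists>a>0. affine_near g ((g ^^ j) x) a"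
  shows "\<exists>a>0. affine_near (g ^^ n) x a"
  using assms
proof (induction n)
  case 0
  have "affine_near (g ^^ 0) x 1" unfolding affine_near_def by auto
  then show ?case using zero_less_one by blast
next
  case (Suc n)
  obtain a where "a > 0" "affine_near (g ^^ n) x a" using Suc by auto
  moreover obtain b where "b > 0" "affine_near g ((g ^^ n) x) b" using Suc.prems by auto
  ultimately have "affine_near (g ^^ Suc n) x (b * a)" "b * a > 0"
    by (simp_all add: affine_near_comp del: comp_apply)
  then show ?case by blast
qed

lemma affine_near_funpow_fixed:
  assumes "affine_near h x a" "h x = x"
  shows "affine_near (h ^^ n) x (a ^ n)"
proof (induction n)
  case 0
  show ?case unfolding affine_near_def by auto
next
  case (Suc n)
  have "(h ^^ n) x = x" using assms(2) by (induction n) auto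
  then show ?case using affine_near_comp[of h "h ^^ n" x a "a ^ n"] assms(1) Suc
    by (simp del: comp_apply)
qed

lemma affine_eventually_id:
  assumes "\<forall>\<^sub>F y in nhds (x::real). a * y + c = y"
  shows "a = 1" "c = 0"
proof -
  obtain e where e: "e > 0" "\<And>y. dist y x < e \<Longrightarrow> a * y + c = y"
    using assms unfolding eventually_nhds_metric by blast
  have "a * x + c = x" "a * (x + e / 2) + c = x + e / 2" using e by (auto simp: dist_real_def)
  then have "a * (e / 2) = 1 * (e / 2)" by (simp add: algebra_simps del: times_divide_eq_right)
  then show "a = 1" using e(1) by (simp only: mult_cancel_right) simp
  with \<open>a * x + c = x\<close> show "c = 0" by simp
qed

text \<open>The slope of the N-th iterate is the N-th power of the slope.\<close>
lemma affine_near_periodic_fixed_imp_id: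
  assumes aff: "affine_near h x a" and "a > 0" and fixed: "h x = x"
    and "n > 0" and per: "\<forall>\<^sub>F y in nhds x. (h ^^ n) y = y"
  shows "\<forall>\<^sub>F y in nhds x. h y = y"
proof -
  obtain c where c: "\<forall>\<^sub>F y in nhds x. (h ^^ n) y = a ^ n * y + c"
    using affine_near_funpow_fixed[OF aff fixed] unfolding affine_near_def by blast
  from c per have "\<forall>\<^sub>F y in nhds x. a ^ n * y + c = y" by eventually_elim simp
  then have "a ^ n = 1" by (rule affine_eventually_id)
  then have "a = 1" using power_eq_1_iff[of a n] \<open>a > 0\<close> \<open>n > 0\<close> by simp
  obtain d where d: "\<forall>\<^sub>F y in nhds x. h y = a * y + d" using aff unfolding affine_near_def by blast
  have "d = 0" using eventually_nhds_x_imp_x[OF d] fixed \<open>a = 1\<close> by simp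
  with d show ?thesis using \<open>a = 1\<close> by simp
qed

lemma displaced_neighbourhood:
  fixes h :: "'a::t2_space \<Rightarrow> 'a"
  assumes "isCont h x" "h x \<noteq> x"
  shows "\<exists>U. open U \<and> x \<in> U \<and> h ` U \<inter> U = {}"
proof -
  obtain V W where VW: "open V" "open W" "h x \<in> V" "x \<in> W" "V \<inter> W = {}"
    using hausdorff[OF assms(2)] by blast
  have "\<forall>\<^sub>F y in nhds x. h y \<in> V"
    using assms(1) VW(1,3) unfolding isCont_def tendsto_at_iff_tendsto_nhds by (rule topological_tendstoD)
  moreover have "\<forall>\<^sub>F y in nhds x. y \<in> W" using VW(2,4) by (rule eventually_nhds_in_open)
  ultimately have "\<forall>\<^sub>F y in nhds x. h y \<in> V \<and> y \<in> W" by (rule eventually_conj)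
  then obtain U where "open U" "x \<in> U" "\<forall>y\<in>U. h y \<in> V \<and> y \<in> W" unfolding eventually_nhds by blast
  then show ?thesis using VW(5) by blast
qed

lemma sorted_partition_interval:
  fixes bs :: "real list"
  assumes "length bs \<ge> 2" "sorted_wrt (<) bs" "hd bs = 0" "last bs = 1"
    and "0 < p" "p < 1" "p \<notin> set bs"
  shows "\<exists>i < length bs - 1. bs ! i < p \<and> p < bs ! Suc i"
proof -
  define I where "I = {i. i < length bs \<and> bs ! i < p}"
  have "bs \<noteq> []" using assms(1) by auto
  then have first: "bs ! 0 = 0" and last: "bs ! (length bs - 1) = 1"
    using assms(3,4) by (simp_all add: hd_conv_nth last_conv_nth)
  have "finite I" "0 \<in> I" unfolding I_def using first assms(5) \<open>bs \<noteq> []\<close> by auto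
  define i where "i = Max I"
  have "i \<in> I" unfolding i_def using \<open>finite I\<close> \<open>0 \<in> I\<close> by (intro Max_in) auto
  then have "i < length bs - 1" "bs ! i < p"
    using last assms(6) unfolding I_def by (auto simp: less_Suc_eq nat_less_le)
  moreover have "Suc i \<notin> I" using Max_ge[OF \<open>finite I\<close>, of "Suc i"] unfolding i_def by auto
  moreover have "bs ! Suc i \<noteq> p" using assms(7) calculation(1) nth_mem[of "Suc i" bs] by auto
  ultimately show ?thesis unfolding I_def by (intro exI[of _ i]) auto
qed

text \<open>Off the breakpoints and off the preimage of the point 0 = 1 of the circle, an element of V
  is an honest affine map of the real line near the point.\<close>
lemma thompsonV_affine_near:
  assumes "thompsonV g"
  shows "\<exists>B. finite B \<and> (\<forall>p \<in> S1 - B. \<exists>a>0. affine_near g p a)"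
proof -
  obtain bs :: "real list" where len: "length bs \<ge> 2" and sorted: "sorted_wrt (<) bs"
    and hd: "hd bs = 0" and last: "last bs = 1"
    and pieces: "\<forall>i < length bs - 1. \<exists>k::int. \<exists>c::real. dyadic c \<and>
            (\<forall>x \<in> {bs ! i <.. bs ! Suc i}. g x = circ (2 powi k * x + c))"
    using assms unfolding thompsonV_def by blast
  have inj: "inj_on g S1" using assms unfolding thompsonV_def by (blast dest: bij_betw_imp_inj_on)
  define B where "B = set bs \<union> (g -` {1} \<inter> S1)"
  have "finite B" unfolding B_def using finite_vimage_IntI[OF _ inj] by auto
  moreover have "\<exists>a>0. affine_near g p a" if p: "p \<in> S1 - B" for p
  proof -
    have "1 \<in> set bs" using last len by (metis last_in_set list.size(3) not_numeral_le_zero)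
    then have "0 < p" "p < 1" "p \<notin> set bs" "g p \<noteq> 1" using p unfolding B_def S1_def by (auto simp: less_le)
    then obtain i where i: "i < length bs - 1" "p \<in> {bs ! i <..< bs ! Suc i}"
      using sorted_partition_interval[OF len sorted hd last] by auto
    obtain k :: int and c where kc: "\<forall>y \<in> {bs ! i <.. bs ! Suc i}. g y = circ (2 powi k * y + c)"
      using pieces i(1) by blast
    define L where "L y = 2 powi k * y + c" for y
    have near: "\<forall>\<^sub>F y in nhds p. g y = circ (L y)"
      using eventually_nhds_in_open[OF open_greaterThanLessThan i(2)]
      by eventually_elim (use kc in \<open>auto simp: L_def\<close>)
    then have "circ (L p) \<noteq> 1" using eventually_nhds_x_imp_x \<open>g p \<noteq> 1\<close> by force
    from circ_eventually_translation[OF this] obtain n :: int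
      where "\<forall>\<^sub>F t in nhds (L p). circ t = t - of_int n" by blast
    moreover have "filterlim L (nhds (L p)) (nhds p)"
      unfolding L_def using tendsto_at_iff_tendsto_nhds by (auto intro!: tendsto_eq_intros)
    ultimately have "\<forall>\<^sub>F y in nhds p. circ (L y) = L y - of_int n" by (rule eventually_compose_filterlim)
    with near have "\<forall>\<^sub>F y in nhds p. g y = 2 powi k * y + (c - of_int n)"
      by eventually_elim (simp add: L_def)
    then show ?thesis unfolding affine_near_def by (intro exI[of _ "2 powi k"]) auto
  qed
  ultimately show ?thesis by blast
qed

lemma is_id_funpow: "is_id h \<Longrightarrow> is_id (h ^^ n)"
  unfolding is_id_def by (induction n) auto

lemma is_id_funpow_commute: "is_id (g ^^ N) \<Longrightarrow> is_id ((g ^^ k) ^^ N)"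
  using is_id_funpow[of "g ^^ N" k] by (simp add: funpow_mult mult.commute)

lemma funpow_in_S1: "bij_betw g S1 S1 \<Longrightarrow> y \<in> S1 \<Longrightarrow> (g ^^ j) y \<in> S1"
  by (rule bij_betw_apply[OF bij_betw_funpow])

lemma funpow_mod_order:
  assumes "bij_betw g S1 S1" "is_id (g ^^ N)" "y \<in> S1"
  shows "(g ^^ j) y = (g ^^ (j mod N)) y"
proof -
  have "g ^^ j = (g ^^ N) ^^ (j div N) \<circ> g ^^ (j mod N)"
    by (metis div_mult_mod_eq funpow_add funpow_mult mult.commute)
  then show ?thesis
    using is_id_funpow[OF assms(2)] funpow_in_S1[OF assms(1,3)] unfolding is_id_def by simp
qed

lemma inv_into_eq_funpow:
  assumes "bij_betw g S1 S1" "N > 0" "is_id (g ^^ N)" "y \<in> S1"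
  shows "inv_into S1 g y = (g ^^ (N - 1)) y"
proof (rule inv_into_f_eq)
  show "inj_on g S1" using assms(1) by (rule bij_betw_imp_inj_on)
  show "(g ^^ (N - 1)) y \<in> S1" using funpow_in_S1[OF assms(1,4)] .
  have "g ((g ^^ (N - 1)) y) = (g ^^ Suc (N - 1)) y" by simp
  then show "g ((g ^^ (N - 1)) y) = y" using assms(2,3,4) unfolding is_id_def by simp
qed

lemma zpow_eq_funpow_below_order:
  assumes "bij_betw g S1 S1" "N > 0" "is_id (g ^^ N)"
  shows "\<exists>k<N. \<forall>y\<in>S1. zpow g n y = (g ^^ k) y"
proof -
  have inv_pow: "(inv_into S1 g ^^ m) y = (g ^^ ((N - 1) * m)) y" if "y \<in> S1" for m y
  proof (induction m)
    case (Suc m)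
    have "(inv_into S1 g ^^ Suc m) y = (g ^^ (N - 1)) ((g ^^ ((N - 1) * m)) y)"
      using Suc inv_into_eq_funpow[OF assms funpow_in_S1[OF assms(1) that]] by simp
    also have "\<dots> = (g ^^ ((N - 1) * Suc m)) y"
      by (simp only: funpow_add mult_Suc_right comp_apply)
    finally show ?case .
  qed simp
  obtain j where j: "\<forall>y\<in>S1. zpow g n y = (g ^^ j) y"
  proof (cases "0 \<le> n")
    case True then show ?thesis using that[of "nat n"] unfolding zpow_def by simp
  next
    case False then show ?thesis using that[of "(N - 1) * nat (- n)"] inv_pow unfolding zpow_def by simp
  qed
  moreover have "\<forall>y\<in>S1. (g ^^ j) y = (g ^^ (j mod N)) y" using funpow_mod_order[OF assms(1,3)] by blast
  ultimately show ?thesis using assms(2) by (intro exI[of _ "j mod N"]) simp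
qed

lemma weakly_wandering_open_if_locally_trivial:
  assumes "bij_betw g S1 S1" "N > 0" "is_id (g ^^ N)" "x \<in> {0<..<1}"
    and local: "\<And>k. k < N \<Longrightarrow>
      \<exists>U. open U \<and> x \<in> U \<and> ((\<forall>y\<in>U. (g ^^ k) y = y) \<or> (g ^^ k) ` U \<inter> U = {})"
  shows "\<exists>U. s1_open U \<and> U \<noteq> {} \<and> weakly_wandering g U"
proof -
  obtain V where V: "\<And>k. k < N \<Longrightarrow> open (V k) \<and> x \<in> V k \<and>
      ((\<forall>y\<in>V k. (g ^^ k) y = y) \<or> (g ^^ k) ` V k \<inter> V k = {})"
    using local by metis
  define U where "U = (\<Inter>k<N. V k) \<inter> {0<..<1}"
  have "open (\<Inter>k<N. V k)" using V by (intro open_INT) auto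
  then have "open U" unfolding U_def by (intro open_Int) auto
  moreover have "x \<in> U" unfolding U_def using V assms(4) by auto
  ultimately have "s1_open U" "U \<noteq> {}"
    using s1_open_if_open_in_unit_interval[of U] unfolding U_def by auto
  moreover have "weakly_wandering g U" unfolding weakly_wandering_def
  proof
    fix n :: int
    obtain k where k: "k < N" "\<forall>y\<in>S1. zpow g n y = (g ^^ k) y"
      using zpow_eq_funpow_below_order[OF assms(1-3)] by blast
    have "U \<subseteq> V k" "U \<subseteq> S1" using k(1) unfolding U_def S1_def by auto
    then have same: "\<forall>y\<in>U. zpow g n y = (g ^^ k) y" using k(2) by auto
    show "(\<forall>y\<in>U. zpow g n y = y) \<or> zpow g n ` U \<inter> U = {}"
    proof (cases "\<forall>y\<in>V k. (g ^^ k) y = y")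
      case True
      then show ?thesis using same \<open>U \<subseteq> V k\<close> by auto
    next
      case False
      then have "(g ^^ k) ` V k \<inter> V k = {}" using V[OF k(1)] by blast
      moreover have "zpow g n ` U \<subseteq> (g ^^ k) ` V k" using same \<open>U \<subseteq> V k\<close> by auto
      ultimately show ?thesis using \<open>U \<subseteq> V k\<close> by blast
    qed
  qed
  ultimately show ?thesis by blast
qed

lemma strict_mono_funpow:
  fixes H :: "'a::order \<Rightarrow> 'a"
  shows "strict_mono H \<Longrightarrow> strict_mono (H ^^ n)"
  by (induction n) (simp_all add: strict_mono_def)

lemma strict_mono_periodic_point_fixed:
  fixes H :: "'a::linorder \<Rightarrow> 'a"
  assumes mono: "strict_mono H" and "(H ^^ n) y = y" "n > 0"
  shows "H y = y"
proof -
  have up: "y < (H ^^ Suc m) y" if "y < H y" for m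
  proof (induction m)
    case (Suc m)
    then have "H y < H ((H ^^ Suc m) y)" using mono by (simp add: strict_mono_less)
    then show ?case using that by simp
  qed (use that in simp)
  have down: "(H ^^ Suc m) y < y" if "H y < y" for m
  proof (induction m)
    case (Suc m)
    then have "H ((H ^^ Suc m) y) < H y" using mono by (simp add: strict_mono_less)
    then show ?case using that by simp
  qed (use that in simp)
  obtain m where "n = Suc m" using \<open>n > 0\<close> gr0_implies_Suc by blast
  then show ?thesis using up[of m] down[of m] \<open>(H ^^ n) y = y\<close> by (cases "H y" y rule: linorder_cases) auto
qed

lemma funpow_lift: "(\<And>y. h (circ y) = circ (H y)) \<Longrightarrow> (h ^^ n) (circ y) = circ ((H ^^ n) y)"
  by (induction n) auto

lemma funpow_degree_one:
  fixes H :: "real \<Rightarrow> real"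
  assumes "\<And>y. H (y + 1) = H y + 1"
  shows "(H ^^ n) (y + 1) = (H ^^ n) y + 1"
  by (induction n) (auto simp: assms)

lemma periodic_is_id_if_lift_fixes_point:
  fixes H :: "real \<Rightarrow> real"
  assumes mono: "strict_mono H" and degree: "\<And>y. H (y + 1) = H y + 1"
    and lift: "\<And>y. h (circ y) = circ (H y)"
    and "N > 0" and per: "is_id (h ^^ N)" and "H x = x"
  shows "is_id h"
proof -
  have fixed: "H y = y" if "x \<le> y" "y < x + 1" for y
  proof (rule strict_mono_periodic_point_fixed[OF mono _ \<open>N > 0\<close>])
    have HN_x: "(H ^^ N) x = x" using \<open>H x = x\<close> by (induction N) auto
    have "strict_mono (H ^^ N)" using mono by (rule strict_mono_funpow)
    then have "(H ^^ N) x \<le> (H ^^ N) y" "(H ^^ N) y < (H ^^ N) (x + 1)"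
      using that by (simp_all add: strict_mono_less_eq strict_mono_less)
    then have "x \<le> (H ^^ N) y" "(H ^^ N) y < x + 1"
      using HN_x funpow_degree_one[of H, OF degree, of N x] by simp_all
    moreover have "circ ((H ^^ N) y) = circ y"
      using funpow_lift[of h H N y, OF lift] per circ_in_S1[of y] unfolding is_id_def by simp
    ultimately show "(H ^^ N) y = y" using circ_inj_window that by blast
  qed
  show ?thesis unfolding is_id_def
  proof
    fix z assume "z \<in> S1"
    then obtain y where "x \<le> y" "y < x + 1" "circ y = z" by (rule circ_surj_window)
    then show "h z = z" using lift[of y] fixed by simp
  qed
qed

lemma periodic_is_id_if_fixed_point:
  fixes H :: "real \<Rightarrow> real"
  assumes mono: "strict_mono H" and degree: "\<And>y. H (y + 1) = H y + 1"
    and lift: "\<And>y. h (circ y) = circ (H y)"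
    and "N > 0" and "is_id (h ^^ N)" and "x \<in> S1" "h x = x"
  shows "is_id h"
proof -
  have "circ (H x) = circ x" using lift[of x] circ_id[OF \<open>x \<in> S1\<close>] \<open>h x = x\<close> by simp
  then obtain j :: int where j: "H x = x + of_int j" using circ_eq_circ_iff by blast
  show ?thesis
  proof (rule periodic_is_id_if_lift_fixes_point)
    show "strict_mono (\<lambda>y. H y - of_int j)" using mono by (simp add: strict_mono_def)
    show "H (y + 1) - of_int j = H y - of_int j + 1" for y using degree by simp
    show "h (circ y) = circ (H y - of_int j)" for y using lift circ_add_int[of "H y - of_int j" j] by simp
    show "H x - of_int j = x" using j by simp
  qed fact+
qed

lemma thompsonT_weakly_wandering_imp_wandering:
  assumes T: "thompsonT g" and "N > 0" "is_id (g ^^ N)"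
    and "U \<subseteq> S1" and ww: "weakly_wandering g U"
  shows "wandering g U"
  unfolding wandering_def
proof (intro allI impI)
  fix n :: int assume not_id: "\<not> is_id (zpow g n)"
  have bij: "bij_betw g S1 S1" using T unfolding thompsonT_def thompsonV_def by blast
  obtain F :: "real \<Rightarrow> real" where mono: "strict_mono F" and degree: "\<And>y. F (y + 1) = F y + 1"
    and lift: "\<And>y. g (circ y) = circ (F y)" using T unfolding thompsonT_def by blast
  obtain k where k: "\<forall>y\<in>S1. zpow g n y = (g ^^ k) y"
    using zpow_eq_funpow_below_order[OF bij \<open>N > 0\<close> \<open>is_id (g ^^ N)\<close>] by blast
  show "zpow g n ` U \<inter> U = {}"
  proof (rule ccontr)
    assume "zpow g n ` U \<inter> U \<noteq> {}"
    then obtain x where "x \<in> U" using ww unfolding weakly_wandering_def by blast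
    moreover have "\<forall>y\<in>U. zpow g n y = y"
      using ww \<open>zpow g n ` U \<inter> U \<noteq> {}\<close> unfolding weakly_wandering_def by blast
    ultimately have "x \<in> S1" "(g ^^ k) x = x" using k \<open>U \<subseteq> S1\<close> by (metis subsetD)+
    then have "is_id (g ^^ k)"
      using periodic_is_id_if_fixed_point[OF strict_mono_funpow[OF mono]
          funpow_degree_one[of F, OF degree] funpow_lift[of g F, OF lift] \<open>N > 0\<close>
          is_id_funpow_commute[OF \<open>is_id (g ^^ N)\<close>]] by blast
    then show False using not_id k unfolding is_id_def by simp
  qed
qed

lemma thompsonV_periodic_weakly_wandering:
  assumes V: "thompsonV g" and "N > 0" and per: "is_id (g ^^ N)"
  shows "\<exists>U. s1_open U \<and> U \<noteq> {} \<and> weakly_wandering g U"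
proof -
  have bij: "bij_betw g S1 S1" using V unfolding thompsonV_def by blast
  obtain B where "finite B" and B: "\<And>p. p \<in> S1 - B \<Longrightarrow> \<exists>a>0. affine_near g p a"
    using thompsonV_affine_near[OF V] by blast
  define Bad where "Bad = (\<Union>j<N. (g ^^ j) -` B \<inter> S1)"
  have "finite Bad" unfolding Bad_def
  proof (rule finite_UN_I)
    show "finite ((g ^^ j) -` B \<inter> S1)" for j
      using \<open>finite B\<close> bij_betw_imp_inj_on[OF bij_betw_funpow[OF bij]] by (rule finite_vimage_IntI)
  qed simp
  then have "infinite ({0<..<1::real} - Bad)" by (intro Diff_infinite_finite infinite_Ioo) auto
  then obtain x where x: "x \<in> {0<..<1}" "x \<notin> Bad" by (metis Diff_iff finite.emptyI ex_in_conv)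
  then have "x \<in> S1" unfolding S1_def by auto
  have orbit: "(g ^^ j) x \<in> S1 - B" if "j < N" for j
    using x that funpow_in_S1[OF bij \<open>x \<in> S1\<close>] \<open>x \<in> S1\<close> unfolding Bad_def by auto
  show ?thesis
  proof (rule weakly_wandering_open_if_locally_trivial[OF bij \<open>N > 0\<close> per x(1)])
    fix k assume "k < N"
    then obtain a where "a > 0" and aff: "affine_near (g ^^ k) x a"
      using affine_near_funpow_orbit[of k g x] B orbit by force
    show "\<exists>U. open U \<and> x \<in> U \<and> ((\<forall>y\<in>U. (g ^^ k) y = y) \<or> (g ^^ k) ` U \<inter> U = {})"
    proof (cases "(g ^^ k) x = x")
      case True
      have "\<forall>\<^sub>F y in nhds x. y \<in> {0<..<1}" using x(1) by (intro eventually_nhds_in_open) auto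
      then have "\<forall>\<^sub>F y in nhds x. ((g ^^ k) ^^ N) y = y"
        using is_id_funpow_commute[OF per] unfolding is_id_def S1_def by (auto elim: eventually_mono)
      from affine_near_periodic_fixed_imp_id[OF aff \<open>a > 0\<close> True \<open>N > 0\<close> this]
      show ?thesis unfolding eventually_nhds by blast
    next
      case False
      then show ?thesis using displaced_neighbourhood[OF affine_near_isCont[OF aff]] by blast
    qed
  qed
qed

theorem lemma4p3:
  fixes g :: "real \<Rightarrow> real"
  assumes "thompsonV g" and "finite_order g"
  shows "(\<exists>U. s1_open U \<and> U \<noteq> {} \<and> weakly_wandering g U) \<and>
         (thompsonT g \<longrightarrow>
            (\<exists>U. s1_open U \<and> U \<noteq> {} \<and> wandering g U) \<and>
            (\<forall>U. U \<subseteq> S1 \<longrightarrow> weakly_wandering g U \<longrightarrow> wandering g U))"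
proof -
  obtain N where "N > 0" "is_id (g ^^ N)" using assms(2) unfolding finite_order_def by blast
  obtain U where U: "s1_open U" "U \<noteq> {}" "weakly_wandering g U"
    using thompsonV_periodic_weakly_wandering[OF assms(1) \<open>N > 0\<close> \<open>is_id (g ^^ N)\<close>] by blast
  moreover have "wandering g U'"
    if "thompsonT g" "U' \<subseteq> S1" "weakly_wandering g U'" for U'
    using thompsonT_weakly_wandering_imp_wandering[OF that(1) \<open>N > 0\<close> \<open>is_id (g ^^ N)\<close> that(2,3)] .
  moreover have "U \<subseteq> S1" using U(1) unfolding s1_open_def by blast
  ultimately show ?thesis by blast
qed

end
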